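(* Let $N, D$ be positive integers with $N \ge 2$, and let $\mathcal{G}$ be the complete graph on $N$ nodes. For any weight matrix $\mathbf{W} \in \mathbb{R}^{D\times D}$, the class $\mathcal{F}_{\mathcal{G},\mathbf{W}}$ of all maps $\hat f : \mathbb{R}^{N\times D} \to \mathbb{R}$ of the form $\hat f = \mathrm{MLP} \circ \mathcal{L}^{\mathrm{conv}}_{\mathcal{G},\mathbf{W}}$, where $\mathcal{L}^{\mathrm{conv}}_{\mathcal{G},\mathbf{W}}(\mathbf{X}) = \tilde{\mathbf{A}}\mathbf{X}\mathbf{W}$ and $\mathrm{MLP}$ ranges over all multilayer perceptrons $\mathbb{R}^{N\times D}\to\mathbb{R}$ with $\mathrm{SiLU}$ activation, is not a universal approximator in $\mathcal{C}(\mathbb{R}^{N\times D})$.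
   Context: $\mathrm{SiLU}(x) = x/(1+e^{-x})$, applied elementwise. $\tilde{\mathbf{A}} \in \mathbb{R}^{N\times N}$ is the degree-normalized adjacency matrix with self-loops: $\tilde{\mathbf{A}}_{ij} = 1/\sqrt{\deg(v_i)\deg(v_j)}$ if $v_i, v_j$ are adjacent or $i=j$, and $0$ otherwise, where degrees count the self-loop; for the complete graph every entry of $\tilde{\mathbf{A}}$ equals $1/N$. MLPs take the matrix input $\mathbf{X}$ (viewed as a vector in $\mathbb{R}^{ND}$) to a real number. $\mathcal{C}(\mathbb{R}^{N\times D})$ denotes the continuous functions $\mathbb{R}^{N\times D}\to\mathbb{R}$. A class $\mathcal{F} \subseteq \mathcal{C}(\mathbb{R}^{N\times D})$ is a universal approximator if for every continuous $f:\mathbb{R}^{N\times D}\to\mathbb{R}$, every $\varepsilon>0$ and every nonempty compact $K \subset \mathbb{R}^{N\times D}$ there is $\hat f \in \mathcal{F}$ with $\max_{\mathbf{X}\in K}|f(\mathbf{X}) - \hat f(\mathbf{X})| < \varepsilon$. *)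

theory Defs
  imports "HOL-Analysis.Analysis"
begin

definition silu :: "real \<Rightarrow> real" where
  "silu x = x / (1 + exp (- x))"

definition graph_deg :: "('n::finite \<Rightarrow> 'n \<Rightarrow> bool) \<Rightarrow> 'n \<Rightarrow> real" where
  "graph_deg E i = real (card {j. E i j \<or> j = i})"

definition norm_adj :: "('n::finite \<Rightarrow> 'n \<Rightarrow> bool) \<Rightarrow> real^'n^'n" where
  "norm_adj E = (\<chi> i j. if E i j \<or> i = j then 1 / sqrt (graph_deg E i * graph_deg E j) else 0)"

definition complete_graph :: "'n \<Rightarrow> 'n \<Rightarrow> bool" where
  "complete_graph i j = (i \<noteq> j)"

definition conv_layer :: "('n::finite \<Rightarrow> 'n \<Rightarrow> bool) \<Rightarrow> real^'d^'d \<Rightarrow> real^'d^'n \<Rightarrow> real^'d^'n" where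
  "conv_layer E W X = norm_adj E ** X ** W"

text \<open>Hidden-layer outputs of SiLU MLPs on inputs in R^(N x D) (flattened entries X\$i\$l).
  mlp_hidden k h: h X is the vector (h X 0, ..., h X (k-1)) of a hidden layer of width k.\<close>
inductive mlp_hidden :: "nat \<Rightarrow> (real^'d::finite^'n::finite \<Rightarrow> nat \<Rightarrow> real) \<Rightarrow> bool" where
  first: "mlp_hidden k (\<lambda>X j. silu ((\<Sum>i\<in>UNIV. \<Sum>l\<in>UNIV. A j i l * X$i$l) + b j))"
| step: "mlp_hidden m h \<Longrightarrow> mlp_hidden k (\<lambda>X j. silu ((\<Sum>i<m. A j i * h X i) + b j))"

definition mlp :: "(real^'d::finite^'n::finite \<Rightarrow> real) set" where
  "mlp = {(\<lambda>X. (\<Sum>i\<in>UNIV. \<Sum>l\<in>UNIV. c i l * X$i$l) + b0) | c b0. True}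
       \<union> {(\<lambda>X. (\<Sum>i<m. c i * h X i) + b0) | m h c b0. mlp_hidden m h}"

definition universal_approximator :: "('a::real_normed_vector \<Rightarrow> real) set \<Rightarrow> bool" where
  "universal_approximator F \<longleftrightarrow>
     (\<forall>f. continuous_on UNIV f \<longrightarrow>
        (\<forall>\<epsilon>>0. \<forall>K. compact K \<and> K \<noteq> {} \<longrightarrow>
           (\<exists>g\<in>F. \<forall>X\<in>K. \<bar>f X - g X\<bar> < \<epsilon>)))"

end

theory Submission
  imports Defs
begin

text \<open>On the complete graph every entry of the normalized adjacency matrix is 1/N, so the
  convolution layer only sees the column sums of its input. Two inputs with equal column sums,
  such as the matrices whose only nonzero row (all ones) sits at two different nodes, are
  therefore identified by every map of the class, whereas a continuous function such as the
  distance to one of them separates them.\<close>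

lemma not_universal_approximator_if_not_separating:
  fixes F :: "('a::real_normed_vector \<Rightarrow> real) set"
  assumes "X \<noteq> Y" and "\<And>g. g \<in> F \<Longrightarrow> g X = g Y"
  shows "\<not> universal_approximator F"
proof
  assume "universal_approximator F"
  moreover have "continuous_on UNIV (\<lambda>Z. dist Z X)"
    by (intro continuous_intros)
  moreover have "dist X Y / 2 > 0" and "compact {X, Y}"
    using \<open>X \<noteq> Y\<close> by auto
  ultimately obtain g where "g \<in> F"
    and "\<forall>Z\<in>{X, Y}. \<bar>dist Z X - g Z\<bar> < dist X Y / 2"
    unfolding universal_approximator_def by blast
  moreover have "g Y = g X"
    using assms(2)[OF \<open>g \<in> F\<close>] by simp
  ultimately have "\<bar>g X\<bar> < dist X Y / 2" and "\<bar>dist Y X - g X\<bar> < dist X Y / 2"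
    by auto
  then show False
    by (simp add: dist_commute)
qed

lemma graph_deg_complete_graph:
  "graph_deg (complete_graph :: 'n::finite \<Rightarrow> 'n \<Rightarrow> bool) i = real CARD('n)"
proof -
  have "{j. complete_graph i j \<or> j = i} = (UNIV :: 'n set)"
    by (auto simp: complete_graph_def)
  then show ?thesis
    by (simp add: graph_deg_def)
qed

lemma norm_adj_complete_graph:
  "norm_adj (complete_graph :: 'n::finite \<Rightarrow> 'n \<Rightarrow> bool) $ i $ j = 1 / real CARD('n)"
  by (simp add: norm_adj_def graph_deg_complete_graph complete_graph_def)

lemma conv_layer_complete_graph_eq:
  fixes W :: "real^'d::finite^'d" and X Y :: "real^'d^'n::finite"
  assumes "\<And>l. (\<Sum>i\<in>UNIV. X $ i $ l) = (\<Sum>i\<in>UNIV. Y $ i $ l)"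
  shows "conv_layer complete_graph W X = conv_layer complete_graph W Y"
proof -
  have "norm_adj complete_graph ** X = norm_adj complete_graph ** Y"
    using assms
    by (simp add: matrix_matrix_mult_def norm_adj_complete_graph vec_eq_iff
        flip: sum_divide_distrib)
  then show ?thesis
    by (simp add: conv_layer_def)
qed

theorem theorem1:
  fixes W :: "real^'d::finite^'d"
  assumes "CARD('n::finite) \<ge> 2"
  shows "\<not> universal_approximator
           {g \<circ> conv_layer (complete_graph :: 'n \<Rightarrow> 'n \<Rightarrow> bool) W | g. g \<in> mlp}"
proof -
  obtain a b :: 'n where "a \<noteq> b"
    using assms card_le_Suc0_iff_eq[of "UNIV :: 'n set"] by fastforce
  define row_at :: "'n \<Rightarrow> real^'d^'n" where "row_at k = (\<chi> i l. if i = k then 1 else 0)" for k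
  have "row_at a \<noteq> row_at b"
    using \<open>a \<noteq> b\<close> by (simp add: row_at_def vec_eq_iff) blast
  moreover have "conv_layer complete_graph W (row_at a) = conv_layer complete_graph W (row_at b)"
    by (rule conv_layer_complete_graph_eq) (simp add: row_at_def)
  ultimately show ?thesis
    by (intro not_universal_approximator_if_not_separating[of "row_at a" "row_at b"]) auto
qed

end
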